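(* Let $w(A,B)\in\mathbb F_2=\langle A,B\rangle$ and $m=(m_1)$ with $m_1\in\mathbb Z$. The representation $\Theta_2^{w,m}\colon FVB_2\to\mathrm{Aut}(\mathbb F_4)$ is not faithful if and only if $$w(A,B)=A^{k_1}B^{k_2}\cdots A^{k_r}B^{-k_r}\cdots A^{-k_2}B^{-k_1}A^{m_1}$$ for some integers $k_1,\dots,k_r$ (letters alternating between $A$ and $B$), all nonzero except possibly $k_1$ and $k_r$. In this case $\operatorname{Ker}(\Theta_2^{w,m})=X_2\cong\mathbb Z$, where $X_2=FVP_2\cap FVK_2$ is generated by $(\rho_1\sigma_1)^2$. For all other words $w$ the representation $\Theta_2^{w,m}$ is faithful.
   Context: $FVB_2$ is the group with generators $\sigma_1,\rho_1$ and defining relations $\sigma_1^2=\rho_1^2=1$. $\mathbb F_4$ is the free group on $x_1,x_2,y_1,y_2$; automorphisms compose left to right, $(\varphi\psi)(f)=\psi(\varphi(f))$; generators not mentioned are fixed. $\Theta_2^{w,m}\colon FVB_2\to\mathrm{Aut}(\mathbb F_4)$ is the homomorphism given by $\Theta_2^{w,m}(\sigma_1): x_1\mapsto x_2\,w(y_1,y_2),\ x_2\mapsto x_1\,w(y_1,y_2)^{-1}$ and $\Theta_2^{w,m}(\rho_1): x_1\mapsto x_2y_2^{m_1},\ x_2\mapsto x_1y_1^{-m_1},\ y_1\mapsto y_2,\ y_2\mapsto y_1$. Let $S_2=\langle\sigma_1\rangle$, $S_2'=\langle\rho_1\rangle$; $\pi_2\colon FVB_2\to S_2$ with $\pi_2(\sigma_1)=\pi_2(\rho_1)=\sigma_1$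 and $FVP_2=\operatorname{Ker}\pi_2$; $\nu_2\colon FVB_2\to S_2'$ with $\nu_2(\sigma_1)=1$, $\nu_2(\rho_1)=\rho_1$ and $FVK_2=\operatorname{Ker}\nu_2$. *)

theory Defs
  imports Main
begin

text \<open>A word over generators of type 'a is a list of letters (g, True) = g and
 (g, False) = g^-1.  Elements of the free group are the reduced words.\<close>

type_synonym 'a fword = "('a \<times> bool) list"

definition fg_invl :: "'a \<times> bool \<Rightarrow> 'a \<times> bool" where
  "fg_invl x = (fst x, \<not> snd x)"

fun fg_reduced :: "'a fword \<Rightarrow> bool" where
  "fg_reduced (x # y # ys) = (y \<noteq> fg_invl x \<and> fg_reduced (y # ys))"
| "fg_reduced _ = True"

fun fg_cancel :: "'a \<times> bool \<Rightarrow> 'a fword \<Rightarrow> 'a fword" where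
  "fg_cancel x [] = [x]"
| "fg_cancel x (y # ys) = (if y = fg_invl x then ys else x # y # ys)"

definition fg_red :: "'a fword \<Rightarrow> 'a fword" where
  "fg_red xs = foldr fg_cancel xs []"

definition fg_mult :: "'a fword \<Rightarrow> 'a fword \<Rightarrow> 'a fword" where
  "fg_mult u v = fg_red (u @ v)"

definition fg_inv :: "'a fword \<Rightarrow> 'a fword" where
  "fg_inv u = rev (map fg_invl u)"

definition fg_gen :: "'a \<Rightarrow> 'a fword" where
  "fg_gen g = [(g, True)]"

definition fg_genpow :: "'a \<Rightarrow> int \<Rightarrow> 'a fword" where
  "fg_genpow g k = (if 0 \<le> k then replicate (nat k) (g, True)
                    else replicate (nat (- k)) (g, False))"

definition fg_subst :: "('a \<Rightarrow> 'b fword) \<Rightarrow> 'a fword \<Rightarrow> 'b fword" where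
  "fg_subst f w = fg_red (concat (map (\<lambda>(a, b). if b then f a else fg_inv (f a)) w))"

datatype ab = GA | GB
datatype gen4 = X1 | X2 | Y1 | Y2

definition w_at_y :: "ab fword \<Rightarrow> gen4 fword" where
  "w_at_y w = fg_subst (\<lambda>a. case a of GA \<Rightarrow> fg_gen Y1 | GB \<Rightarrow> fg_gen Y2) w"

section \<open>FVB_2 = < sigma_1, rho_1 | sigma_1^2 = rho_1^2 = 1 >\<close>

datatype sr = Sig | Rho

fun fvb_reduced :: "sr list \<Rightarrow> bool" where
  "fvb_reduced (x # y # ys) = (x \<noteq> y \<and> fvb_reduced (y # ys))"
| "fvb_reduced _ = True"

definition FVB2 :: "sr list set" where
  "FVB2 = {g. fvb_reduced g}"

fun fvb_cancel :: "sr \<Rightarrow> sr list \<Rightarrow> sr list" where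
  "fvb_cancel x [] = [x]"
| "fvb_cancel x (y # ys) = (if x = y then ys else x # y # ys)"

definition fvb_red :: "sr list \<Rightarrow> sr list" where
  "fvb_red xs = foldr fvb_cancel xs []"

definition fvb_mult :: "sr list \<Rightarrow> sr list \<Rightarrow> sr list" where
  "fvb_mult g h = fvb_red (g @ h)"

definition fvb_inv :: "sr list \<Rightarrow> sr list" where
  "fvb_inv g = rev g"

definition fvb_pow :: "sr list \<Rightarrow> int \<Rightarrow> sr list" where
  "fvb_pow g n = (if 0 \<le> n then (fvb_mult g ^^ nat n) []
                  else (fvb_mult (fvb_inv g) ^^ nat (- n)) [])"

text \<open>pi_2 : FVB_2 -> S_2 (both generators to sigma_1); kernel FVP_2.
  nu_2 : FVB_2 -> S_2' (sigma_1 to 1, rho_1 to rho_1); kernel FVK_2.\<close>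
definition FVP2 :: "sr list set" where
  "FVP2 = {g \<in> FVB2. even (length g)}"

definition FVK2 :: "sr list set" where
  "FVK2 = {g \<in> FVB2. even (length (filter (\<lambda>s. s = Rho) g))}"

definition FVX2 :: "sr list set" where
  "FVX2 = FVP2 \<inter> FVK2"

definition rs_sq :: "sr list" where
  "rs_sq = [Rho, Sig, Rho, Sig]"

definition Theta_img :: "ab fword \<Rightarrow> int \<Rightarrow> sr \<Rightarrow> gen4 \<Rightarrow> gen4 fword" where
  "Theta_img w m s x = (case s of
      Sig \<Rightarrow> (case x of
               X1 \<Rightarrow> fg_mult (fg_gen X2) (w_at_y w)
             | X2 \<Rightarrow> fg_mult (fg_gen X1) (fg_inv (w_at_y w))
             | _ \<Rightarrow> fg_gen x)
    | Rho \<Rightarrow> (case x of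
               X1 \<Rightarrow> fg_mult (fg_gen X2) (fg_genpow Y2 m)
             | X2 \<Rightarrow> fg_mult (fg_gen X1) (fg_genpow Y1 (- m))
             | Y1 \<Rightarrow> fg_gen Y2
             | Y2 \<Rightarrow> fg_gen Y1))"

text \<open>Automorphisms compose left to right: (phi psi)(f) = psi(phi(f)), so the
  image of g = s_1 s_2 ... s_n acts on f by applying Theta(s_1) first.\<close>
definition Theta :: "ab fword \<Rightarrow> int \<Rightarrow> sr list \<Rightarrow> gen4 fword \<Rightarrow> gen4 fword" where
  "Theta w m g f = foldl (\<lambda>h s. fg_subst (Theta_img w m s) h) f g"

definition Theta_ker :: "ab fword \<Rightarrow> int \<Rightarrow> sr list set" where
  "Theta_ker w m = {g \<in> FVB2. \<forall>f. fg_reduced f \<longrightarrow> Theta w m g f = f}"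

definition faithful :: "ab fword \<Rightarrow> int \<Rightarrow> bool" where
  "faithful w m \<longleftrightarrow> (\<forall>g\<in>FVB2. \<forall>h\<in>FVB2.
      (\<forall>f. fg_reduced f \<longrightarrow> Theta w m g f = Theta w m h f) \<longrightarrow> g = h)"

definition alt_word :: "ab \<Rightarrow> ab \<Rightarrow> int list \<Rightarrow> ab fword" where
  "alt_word a b ks = fg_red (concat (map (\<lambda>i. fg_genpow (if even i then a else b) (ks ! i))
                                         [0..<length ks]))"

definition special_word :: "int list \<Rightarrow> int \<Rightarrow> ab fword" where
  "special_word ks m1 = fg_mult (fg_mult (alt_word GA GB ks) (fg_inv (alt_word GB GA ks)))
                                (fg_genpow GA m1)"

end

theory Submission
  imports Defs
begin

text \<open>
  Each of \<Theta>(\<sigma>1), \<Theta>(\<rho>1) permutes {y1, y2} and sends x1, x2 to x2, x1 times words in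
  y1, y2. So an element of the kernel has an even number of letters \<rho>1 (it fixes y1) and
  even length (it fixes x1), i.e. it lies in X2, which is infinite cyclic generated by
  (\<rho>1 \<sigma>1)^2. This generator fixes y1, y2 and maps x2 to x2 T(y1, y2), where T = z z^\<tau>
  for z = w A^(-m1) and the automorphism \<tau> of F2 exchanging A and B; on x1 it acts through
  a cyclic conjugate of T^(-1). Its k-th power multiplies x2 by T^k, so by torsion-freeness
  of F2 the kernel is trivial unless T = 1, and then it is all of X2.
  Finally z z^\<tau> = 1 means that z^\<tau> is the inverse of z, which for reduced words forces
  z = v (v^\<tau>)^(-1); writing v as an alternating product of powers of A and B gives exactly
  the words of the statement.
\<close>

section \<open>Reduced words over an alphabet with an involution\<close>

text \<open>Free groups are the case where inv flips the exponent of a letter; FVB2, the free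
  product of two groups of order 2, is the case where inv is the identity.\<close>

locale word_reduction =
  fixes inv :: "'a \<Rightarrow> 'a"
  assumes inv_inv [simp]: "inv (inv x) = x"
begin

fun reduced :: "'a list \<Rightarrow> bool" where
  "reduced (x # y # ys) \<longleftrightarrow> y \<noteq> inv x \<and> reduced (y # ys)"
| "reduced _ \<longleftrightarrow> True"

fun cancel :: "'a \<Rightarrow> 'a list \<Rightarrow> 'a list" where
  "cancel x [] = [x]"
| "cancel x (y # ys) = (if y = inv x then ys else x # y # ys)"

definition red :: "'a list \<Rightarrow> 'a list" where
  "red xs = foldr cancel xs []"

definition inv_word :: "'a list \<Rightarrow> 'a list" where
  "inv_word xs = rev (map inv xs)"

lemma reduced_Cons: "reduced (x # xs) \<longleftrightarrow> reduced xs \<and> (xs \<noteq> [] \<longrightarrow> hd xs \<noteq> inv x)"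
  by (cases xs) auto

lemma reduced_append:
  "reduced (xs @ ys) \<longleftrightarrow> reduced xs \<and> reduced ys \<and> (xs \<noteq> [] \<and> ys \<noteq> [] \<longrightarrow> hd ys \<noteq> inv (last xs))"
  by (induction xs) (auto simp: reduced_Cons)

lemma red_Nil [simp]: "red [] = []"
  by (simp add: red_def)

lemma red_Cons: "red (x # xs) = cancel x (red xs)"
  by (simp add: red_def)

lemma reduced_cancel: "reduced ys \<Longrightarrow> reduced (cancel x ys)"
  by (cases ys) (auto simp: reduced_Cons)

lemma reduced_red [simp]: "reduced (red xs)"
  by (induction xs) (auto simp: red_Cons reduced_cancel)

lemma red_reduced: "reduced xs \<Longrightarrow> red xs = xs"
proof (induction xs)
  case (Cons x xs)
  then show ?case by (cases xs) (auto simp: red_Cons reduced_Cons)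
qed simp

lemma red_red [simp]: "red (red xs) = red xs"
  by (simp add: red_reduced)

lemma cancel_inv_cancel: "reduced ys \<Longrightarrow> cancel (inv x) (cancel x ys) = ys"
  by (cases ys rule: reduced.cases) (auto simp: reduced_Cons)

lemma red_append: "red (xs @ ys) = foldr cancel xs (red ys)"
  by (simp add: red_def)

lemma foldr_cancel_red:
  "reduced zs \<Longrightarrow> foldr cancel (red xs) zs = foldr cancel xs zs"
proof (induction xs)
  case (Cons x xs)
  have reduced_foldr: "reduced (foldr cancel ys zs)" for ys
    using Cons.prems by (induction ys) (auto simp: reduced_cancel)
  show ?case
  proof (cases "red xs")
    case (Cons y ys)
    then have "foldr cancel xs zs = cancel y (foldr cancel ys zs)"
      using Cons.IH Cons.prems by simp
    then show ?thesis
      using Cons cancel_inv_cancel[OF reduced_foldr, of "inv x"] by (auto simp: red_Cons)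
  qed (use Cons in \<open>simp_all add: red_Cons\<close>)
qed simp

lemma red_append_red_left [simp]: "red (red xs @ ys) = red (xs @ ys)"
  by (simp add: red_append foldr_cancel_red)

lemma red_append_red_right [simp]: "red (xs @ red ys) = red (xs @ ys)"
  by (simp add: red_append)

lemma red_Cons_red [simp]: "red (x # red xs) = red (x # xs)"
  using red_append_red_right[of "[x]" xs] by simp

lemma red_single [simp]: "red [x] = [x]"
  by (simp add: red_Cons)

lemma inv_word_Nil [simp]: "inv_word [] = []"
  and inv_word_Cons: "inv_word (x # xs) = inv_word xs @ [inv x]"
  and inv_word_append [simp]: "inv_word (xs @ ys) = inv_word ys @ inv_word xs"
  and inv_word_inv_word [simp]: "inv_word (inv_word xs) = xs"
  by (simp_all add: inv_word_def rev_map comp_def)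

lemma red_append_inv_word_cancel [simp]:
  "red (xs @ inv_word xs @ ys) = red ys"
  "red (inv_word xs @ xs @ ys) = red ys"
proof -
  show left: "red (xs @ inv_word xs @ ys) = red ys" for xs
  proof (induction xs rule: rev_induct)
    case (snoc x xs)
    have "red ([x] @ [inv x] @ inv_word xs @ ys) = red (inv_word xs @ ys)"
      using cancel_inv_cancel[OF reduced_red, of "inv x"] by (simp add: red_Cons)
    then have "red (xs @ [x] @ [inv x] @ inv_word xs @ ys) = red (xs @ inv_word xs @ ys)"
      by (metis red_append_red_right)
    then show ?case
      using snoc by (simp add: inv_word_Cons)
  qed simp
  show "red (inv_word xs @ xs @ ys) = red ys"
    using left[of "inv_word xs"] by simp
qed

lemma red_append_inv_word_cancel_mid [simp]:
  "red (xs @ ys @ inv_word ys @ zs) = red (xs @ zs)"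
  "red (xs @ inv_word ys @ ys @ zs) = red (xs @ zs)"
  "red (xs @ ys @ inv_word ys) = red xs"
  "red (xs @ inv_word ys @ ys) = red xs"
proof -
  show "red (xs @ ys @ inv_word ys @ zs) = red (xs @ zs)" for xs ys zs
    by (metis red_append_inv_word_cancel(1) red_append_red_right)
  show "red (xs @ inv_word ys @ ys @ zs) = red (xs @ zs)" for xs ys zs
    by (metis red_append_inv_word_cancel(2) red_append_red_right)
  show "red (xs @ ys @ inv_word ys) = red xs"
    by (metis red_append_inv_word_cancel(1) red_append_red_right append_Nil2)
  show "red (xs @ inv_word ys @ ys) = red xs"
    by (metis red_append_inv_word_cancel(2) red_append_red_right append_Nil2)
qed

lemma inv_word_eq_Nil_iff [simp]: "inv_word xs = [] \<longleftrightarrow> xs = []"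
  by (simp add: inv_word_def)

lemma last_inv_word: "xs \<noteq> [] \<Longrightarrow> last (inv_word xs) = inv (hd xs)"
  by (simp add: inv_word_def last_rev hd_map)

lemma red_append_inv_word [simp]: "red (xs @ inv_word xs) = []" "red (inv_word xs @ xs) = []"
  using red_append_inv_word_cancel_mid(3,4)[of "[]" xs] by simp_all

lemma red_eq_Nil_if_red_Cons_eq_single: "red (x # xs) = [x] \<Longrightarrow> red xs = []"
  using red_append_inv_word_cancel(2)[of "[x]" xs] red_append_red_right[of "[inv x]" "x # xs"]
  by (simp add: inv_word_Cons red_Cons)

lemma reduced_inv_word: "reduced xs \<Longrightarrow> reduced (inv_word xs)"
  by (induction xs) (auto simp: inv_word_Cons reduced_append reduced_Cons last_inv_word)

lemma red_inverse_unique: "red (xs @ ys) = [] \<Longrightarrow> red ys = red (inv_word xs)"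
  by (metis red_append_inv_word_cancel(2) red_append_red_right append_Nil2)

lemma red_inv_word: "red (inv_word xs) = inv_word (red xs)"
proof -
  have "red (red xs @ inv_word xs) = []"
    using red_append_inv_word_cancel_mid(3)[of "[]" xs] by simp
  then have "red (inv_word xs) = red (inv_word (red xs))"
    by (rule red_inverse_unique)
  then show ?thesis
    by (simp add: red_reduced reduced_inv_word)
qed

lemma red_inv_word_eq_Nil_iff: "red (inv_word xs) = [] \<longleftrightarrow> red xs = []"
  by (simp add: red_inv_word)

lemma red_append_eq_Nil_commute: "red (xs @ ys) = [] \<longleftrightarrow> red (ys @ xs) = []"
proof -
  have "red (ys @ xs) = []" if "red (xs @ ys) = []" for xs ys
  proof -
    have "red (ys @ xs) = red (red (inv_word xs) @ xs)"
      using red_inverse_unique[OF that] red_append_red_left[of ys xs] by simp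
    then show ?thesis
      using red_append_inv_word_cancel_mid(4)[of "[]" xs] by simp
  qed
  then show ?thesis by blast
qed

lemma reduced_eq_if_red_append_inv_word_eq_Nil:
  assumes "reduced xs" "reduced ys" "red (xs @ inv_word ys) = []"
  shows "xs = ys"
proof -
  have "inv_word (red ys) = inv_word (red xs)"
    using red_inverse_unique[OF assms(3)] by (simp only: red_inv_word)
  then show ?thesis
    using assms(1,2) by (metis inv_word_inv_word red_reduced)
qed

lemma red_concat_replicate_red: "red (concat (replicate k (red u))) = red (concat (replicate k u))"
proof (induction k)
  case (Suc k)
  then show ?case
    by (metis replicate_Suc concat.simps(2) red_append_red_left red_append_red_right)
qed simp

lemma red_concat_replicate_conj:
  "red (concat (replicate k (c @ v @ inv_word c))) = red (c @ concat (replicate k v) @ inv_word c)"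
proof (induction k)
  case (Suc k)
  have "red (concat (replicate (Suc k) (c @ v @ inv_word c)))
      = red ((c @ v @ inv_word c) @ red (c @ concat (replicate k v) @ inv_word c))"
    by (simp only: replicate_Suc concat.simps(2) red_append_red_right Suc.IH[symmetric])
  also have "\<dots> = red ((c @ v) @ inv_word c @ c @ concat (replicate k v) @ inv_word c)"
    by (metis append_assoc red_append_red_right)
  also have "\<dots> = red (c @ concat (replicate (Suc k) v) @ inv_word c)"
    by (simp only: red_append_inv_word_cancel_mid(2)) simp
  finally show ?case .
qed simp

lemma reduced_eq_red_append_iff:
  assumes "reduced w"
  shows "w = red (x @ y) \<longleftrightarrow> red (w @ inv_word y) = red x"
proof
  assume "w = red (x @ y)"
  then show "red (w @ inv_word y) = red x"
    by simp
next
  assume "red (w @ inv_word y) = red x"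
  then have "red (x @ y) = red (w @ inv_word y @ y)"
    by (metis append_assoc red_append_red_left)
  then show "w = red (x @ y)"
    using assms by (simp add: red_reduced)
qed

end

section \<open>Free groups\<close>

interpretation fg: word_reduction fg_invl
  rewrites "word_reduction.reduced fg_invl = fg_reduced"
    and "word_reduction.cancel fg_invl = fg_cancel"
    and "word_reduction.red fg_invl = fg_red"
    and "word_reduction.inv_word fg_invl = fg_inv"
proof -
  show "word_reduction fg_invl"
    by unfold_locales (simp add: fg_invl_def)
  then interpret word_reduction fg_invl .
  show reduced_eq: "reduced = fg_reduced"
  proof
    show "reduced xs = fg_reduced xs" for xs
      by (induction xs rule: fg_reduced.induct) simp_all
  qed
  show cancel_eq: "cancel = fg_cancel"
  proof (intro ext)
    show "cancel x xs = fg_cancel x xs" for x xs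
      by (cases xs) simp_all
  qed
  show "red = fg_red"
    by (intro ext) (simp add: red_def fg_red_def cancel_eq)
  show "inv_word = fg_inv"
    by (intro ext) (simp add: inv_word_def fg_inv_def)
qed

lemma fg_invl_neq [simp]: "fg_invl x \<noteq> x" "x \<noteq> fg_invl x"
  by (cases x, simp add: fg_invl_def)+

lemma fg_inv_genpow: "fg_inv (fg_genpow a k) = fg_genpow a (- k)"
  by (auto simp: fg_genpow_def fg_inv_def fg_invl_def)

lemma fg_genpow_Cons:
  "0 \<le> k \<Longrightarrow> fg_genpow c (k + 1) = (c, True) # fg_genpow c k"
  "k \<le> 0 \<Longrightarrow> fg_genpow c (k - 1) = (c, False) # fg_genpow c k"
proof -
  assume "0 \<le> k"
  then show "fg_genpow c (k + 1) = (c, True) # fg_genpow c k"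
    by (simp add: fg_genpow_def nat_add_distrib)
next
  assume "k \<le> 0"
  moreover have "nat (- (k - 1)) = Suc (nat (- k))"
    using \<open>k \<le> 0\<close> by simp
  ultimately show "fg_genpow c (k - 1) = (c, False) # fg_genpow c k"
    by (simp add: fg_genpow_def)
qed

lemma hd_fg_genpow: "k \<noteq> 0 \<Longrightarrow> fg_genpow c k \<noteq> [] \<and> hd (fg_genpow c k) = (c, 0 < k)"
  by (auto simp: fg_genpow_def)

definition fg_expand :: "('a \<Rightarrow> 'b fword) \<Rightarrow> 'a fword \<Rightarrow> 'b fword" where
  "fg_expand f w = concat (map (\<lambda>(a, b). if b then f a else fg_inv (f a)) w)"

lemma fg_subst_eq_red_expand: "fg_subst f w = fg_red (fg_expand f w)"
  by (simp add: fg_subst_def fg_expand_def)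

lemma fg_expand_Nil [simp]: "fg_expand f [] = []"
  and fg_expand_append [simp]: "fg_expand f (u @ v) = fg_expand f u @ fg_expand f v"
  and fg_expand_Cons: "fg_expand f ((a, b) # u) = (if b then f a else fg_inv (f a)) @ fg_expand f u"
  by (simp_all add: fg_expand_def)

lemma fg_expand_invl: "fg_expand f [fg_invl x] = fg_inv (fg_expand f [x])"
  by (cases x) (simp add: fg_expand_def fg_invl_def)

lemma fg_expand_single: "fg_expand f (x # u) = fg_expand f [x] @ fg_expand f u"
  by (cases x) (simp add: fg_expand_Cons)

lemma fg_expand_inv: "fg_expand f (fg_inv u) = fg_inv (fg_expand f u)"
proof (induction u)
  case (Cons x u)
  have "fg_expand f (fg_inv (x # u)) = fg_inv (fg_expand f u) @ fg_inv (fg_expand f [x])"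
    by (simp only: fg.inv_word_Cons fg_expand_append Cons.IH fg_expand_invl)
  also have "\<dots> = fg_inv (fg_expand f (x # u))"
    by (simp only: fg_expand_single[of f x u] fg.inv_word_append)
  finally show ?case .
qed simp

lemma fg_red_expand_red: "fg_red (fg_expand f (fg_red u)) = fg_red (fg_expand f u)"
proof (induction u)
  case (Cons x u)
  have "fg_red (fg_expand f (x # u)) = fg_red (fg_expand f [x] @ fg_red (fg_expand f u))"
    by (simp only: fg_expand_single[of f x u] fg.red_append_red_right)
  also have "\<dots> = fg_red (fg_expand f [x] @ fg_expand f (fg_red u))"
    by (simp only: Cons.IH[symmetric] fg.red_append_red_right)
  finally have expand_Cons: "fg_red (fg_expand f (x # u)) = fg_red (fg_expand f [x] @ fg_expand f (fg_red u))" .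
  show ?case
  proof (cases "\<exists>r. fg_red u = fg_invl x # r")
    case True
    then obtain r where r: "fg_red u = fg_invl x # r" by blast
    have "fg_expand f (fg_red u) = fg_inv (fg_expand f [x]) @ fg_expand f r"
      by (simp only: r fg_expand_single[of f "fg_invl x" r] fg_expand_invl)
    then show ?thesis
      using expand_Cons r by (simp add: fg.red_Cons)
  next
    case False
    then have "fg_red (x # u) = x # fg_red u"
      by (cases "fg_red u") (auto simp: fg.red_Cons)
    then show ?thesis
      using expand_Cons fg_expand_single[of f x "fg_red u"] by simp
  qed
qed simp

lemma fg_subst_red [simp]: "fg_subst f (fg_red u) = fg_subst f u"
  by (simp add: fg_subst_eq_red_expand fg_red_expand_red)

lemma fg_subst_append: "fg_subst f (u @ v) = fg_mult (fg_subst f u) (fg_subst f v)"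
  by (simp add: fg_subst_eq_red_expand fg_mult_def)

lemma fg_subst_mult: "fg_subst f (fg_mult u v) = fg_mult (fg_subst f u) (fg_subst f v)"
  by (simp add: fg_mult_def fg_subst_append)

lemma fg_subst_inv: "fg_subst f (fg_inv u) = fg_inv (fg_subst f u)"
  by (simp add: fg_subst_eq_red_expand fg_expand_inv fg.red_inv_word)

lemma fg_reduced_subst [simp]: "fg_reduced (fg_subst f u)"
  by (simp add: fg_subst_def)

lemma fg_subst_Cons_True: "fg_subst f ((a, True) # u) = fg_red (f a @ fg_subst f u)"
  by (simp add: fg_subst_def)

lemma fg_subst_single: "fg_subst f [(a, b)] = (if b then fg_red (f a) else fg_inv (fg_red (f a)))"
  by (simp add: fg_subst_def fg.red_inv_word)

lemma fg_subst_comp: "fg_subst g (fg_subst f u) = fg_subst (\<lambda>a. fg_subst g (f a)) u"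
proof (induction u)
  case (Cons x u)
  obtain a b where x: "x = (a, b)" by (cases x)
  have "fg_subst g (fg_subst f [x]) = fg_subst (\<lambda>a. fg_subst g (f a)) [x]"
    by (simp add: x fg_subst_single fg_subst_inv fg.red_reduced)
  then show ?case
    using Cons.IH fg_subst_append[of f "[x]" u] fg_subst_append[of "\<lambda>a. fg_subst g (f a)" "[x]" u]
    by (simp add: fg_subst_mult)
qed (simp add: fg_subst_def)

lemma fg_subst_id_on:
  assumes "\<And>a. a \<in> fst ` set u \<Longrightarrow> f a = [(a, True)]"
  shows "fg_subst f u = fg_red u"
proof -
  have "fg_expand f u = u"
    using assms by (induction u) (auto simp: fg_expand_def fg_inv_def fg_invl_def)
  then show ?thesis
    by (simp add: fg_subst_eq_red_expand)
qed

definition fg_rename :: "('a \<Rightarrow> 'b) \<Rightarrow> 'a fword \<Rightarrow> 'b fword" where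
  "fg_rename r = map (apfst r)"

lemma fg_rename_Nil [simp]: "fg_rename r [] = []"
  and fg_rename_Cons: "fg_rename r (x # u) = apfst r x # fg_rename r u"
  and fg_rename_append: "fg_rename r (u @ v) = fg_rename r u @ fg_rename r v"
  and fg_rename_rename: "fg_rename r (fg_rename s u) = fg_rename (r \<circ> s) u"
  and fg_rename_inv: "fg_rename r (fg_inv u) = fg_inv (fg_rename r u)"
  and fg_rename_genpow: "fg_rename r (fg_genpow a k) = fg_genpow (r a) k"
  and fg_rename_id [simp]: "fg_rename id u = u"
  by (simp_all add: fg_rename_def fg_inv_def fg_invl_def rev_map apfst_def map_prod_def split_def
      fg_genpow_def)

lemma fg_red_rename:
  assumes "inj r"
  shows "fg_red (fg_rename r u) = fg_rename r (fg_red u)"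
proof (induction u)
  case (Cons x u)
  have "apfst r y = fg_invl (apfst r x) \<longleftrightarrow> y = fg_invl x" for y
    using assms by (cases x, cases y) (auto simp: fg_invl_def inj_eq)
  then show ?case
    using Cons.IH by (cases "fg_red u") (auto simp: fg.red_Cons fg_rename_Cons)
qed simp

lemma fg_reduced_rename: "inj r \<Longrightarrow> fg_reduced u \<Longrightarrow> fg_reduced (fg_rename r u)"
  by (metis fg.red_reduced fg.reduced_red fg_red_rename)

lemma fg_subst_rename:
  assumes "\<And>a. f (r a) = [(s a, True)]"
  shows "fg_subst f (fg_rename r u) = fg_red (fg_rename s u)"
proof -
  have "fg_expand f (fg_rename r u) = fg_rename s u"
    using assms by (induction u) (auto simp: fg_expand_def fg_rename_def fg_inv_def fg_invl_def)
  then show ?thesis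
    by (simp add: fg_subst_eq_red_expand)
qed

lemma fg_subst_eq_rename:
  "(\<And>a. f a = [(s a, True)]) \<Longrightarrow> fg_subst f u = fg_red (fg_rename s u)"
  using fg_subst_rename[of f id s u] by simp

lemma fg_rename_eq_inv_imp_split:
  assumes "fg_rename r u = fg_inv u"
  shows "\<exists>v. u = v @ fg_inv (fg_rename r v)"
  using assms
proof (induction "length u" arbitrary: u rule: less_induct)
  case less
  show ?case
  proof (cases u rule: rev_cases)
    case (snoc u' y)
    show ?thesis
    proof (cases u')
      case Nil
      then show ?thesis
        using less.prems snoc by (cases y) (simp add: fg_rename_def fg_inv_def fg_invl_def)
    next
      case (Cons x v)
      have "apfst r x # fg_rename r v @ [apfst r y] = fg_invl y # fg_inv v @ [fg_invl x]"
        using less.prems snoc Cons by (simp add: fg_rename_Cons fg_rename_append fg.inv_word_Cons)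
      then have xy: "y = fg_invl (apfst r x)" and v: "fg_rename r v = fg_inv v"
        by auto
      obtain v' where "v = v' @ fg_inv (fg_rename r v')"
        using less.hyps[OF _ v] snoc Cons by auto
      then have "u = (x # v') @ fg_inv (fg_rename r (x # v'))"
        using snoc Cons xy by (simp add: fg_rename_Cons fg.inv_word_Cons)
      then show ?thesis
        by blast
    qed
  qed simp
qed

lemma fg_red_append_rename_eq_Nil_iff:
  assumes "inj r" "\<And>a. r (r a) = a"
  shows "fg_red (z @ fg_rename r z) = [] \<longleftrightarrow> (\<exists>v. fg_red z = fg_red (v @ fg_inv (fg_rename r v)))"
proof
  assume trivial: "fg_red (z @ fg_rename r z) = []"
  let ?u = "fg_red z"
  have "fg_red (?u @ fg_rename r ?u) = []"
    using trivial by (simp flip: fg_red_rename[OF assms(1)])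
  then have "fg_red (fg_rename r ?u) = fg_red (fg_inv ?u)"
    by (rule fg.red_inverse_unique)
  then have "fg_rename r ?u = fg_inv ?u"
    by (simp add: fg.red_reduced fg.reduced_inv_word fg_reduced_rename[OF assms(1)])
  then obtain v where "?u = v @ fg_inv (fg_rename r v)"
    using fg_rename_eq_inv_imp_split by blast
  then show "\<exists>v. fg_red z = fg_red (v @ fg_inv (fg_rename r v))"
    by (metis fg.red_red)
next
  assume "\<exists>v. fg_red z = fg_red (v @ fg_inv (fg_rename r v))"
  then obtain v where v: "fg_red z = fg_red (v @ fg_inv (fg_rename r v))"
    by blast
  have rr: "fg_rename r (fg_rename r v) = v"
    by (simp add: fg_rename_rename comp_def assms(2) flip: id_def)
  have "fg_red (z @ fg_rename r z) = fg_red (fg_red z @ fg_rename r (fg_red z))"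
    by (simp flip: fg_red_rename[OF assms(1)])
  also have "\<dots> = fg_red ((v @ fg_inv (fg_rename r v)) @ fg_rename r (v @ fg_inv (fg_rename r v)))"
    by (simp only: v) (simp flip: fg_red_rename[OF assms(1)])
  also have "\<dots> = []"
    by (simp add: fg_rename_append fg_rename_inv rr)
  finally show "fg_red (z @ fg_rename r z) = []" .
qed

subsection \<open>Torsion-freeness\<close>

lemma fg_cyclic_decomposition:
  assumes "fg_reduced u" "u \<noteq> []"
  shows "\<exists>c v. u = c @ v @ fg_inv c \<and> v \<noteq> [] \<and> hd v \<noteq> fg_invl (last v)"
  using assms
proof (induction "length u" arbitrary: u rule: less_induct)
  case less
  show ?case
  proof (cases "hd u = fg_invl (last u)")
    case False
    then show ?thesis
      using less.prems by (intro exI[of _ "[]"] exI[of _ u]) simp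
  next
    case True
    obtain x u' where u: "u = x # u'"
      using less.prems by (cases u) auto
    with True have "u' \<noteq> []"
      by auto
    then obtain v y where u': "u' = v @ [y]"
      by (metis rev_exhaust)
    have y: "y = fg_invl x"
      using True u u' by simp
    have "v \<noteq> []" "fg_reduced v"
      using less.prems(1) u u' y by (auto simp: fg.reduced_Cons fg.reduced_append)
    then obtain c v' where "v = c @ v' @ fg_inv c" "v' \<noteq> []" "hd v' \<noteq> fg_invl (last v')"
      using less.hyps[of v] u u' by auto
    then show ?thesis
      using u u' y by (intro exI[of _ "x # c"] exI[of _ v']) (simp add: fg.inv_word_Cons)
  qed
qed

lemma hd_last_concat_replicate:
  assumes "0 < k" "v \<noteq> []"
  shows "concat (replicate k v) \<noteq> [] \<and> hd (concat (replicate k v)) = hd v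
    \<and> last (concat (replicate k v)) = last v"
  using assms
proof (induction k)
  case (Suc k)
  then show ?case
    by (cases "k = 0") auto
qed simp

lemma fg_reduced_concat_replicate:
  assumes "fg_reduced v" "v \<noteq> []" "hd v \<noteq> fg_invl (last v)"
  shows "fg_reduced (concat (replicate k v))"
proof (induction k)
  case (Suc k)
  then show ?case
    using assms hd_last_concat_replicate[of k v] by (cases "k = 0") (auto simp: fg.reduced_append)
qed simp

lemma fg_torsion_free:
  assumes "0 < k" and "fg_red (concat (replicate k u)) = []"
  shows "fg_red u = []"
proof (rule ccontr)
  assume "fg_red u \<noteq> []"
  then obtain c v where cv: "fg_red u = c @ v @ fg_inv c" "v \<noteq> []" "hd v \<noteq> fg_invl (last v)"
    using fg_cyclic_decomposition[OF fg.reduced_red] by blast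
  then have reduced_cvc: "fg_reduced (c @ v @ fg_inv c)"
    by (metis fg.reduced_red)
  let ?vk = "concat (replicate k v)"
  have vk: "?vk \<noteq> []" "hd ?vk = hd v" "last ?vk = last v"
    using hd_last_concat_replicate[OF assms(1) cv(2)] by auto
  have "fg_reduced (c @ ?vk @ fg_inv c)"
    using reduced_cvc vk cv fg_reduced_concat_replicate[of v k] by (auto simp: fg.reduced_append)
  then have "fg_red (concat (replicate k u)) = c @ ?vk @ fg_inv c"
    using fg.red_concat_replicate_red[of k u] fg.red_concat_replicate_conj[of k c v]
    by (simp add: cv(1) fg.red_reduced)
  then show False
    using assms(2) vk(1) by simp
qed

section \<open>The subgroup X2 of FVB2\<close>

interpretation fvb: word_reduction "\<lambda>x::sr. x"
  rewrites "word_reduction.reduced (\<lambda>x::sr. x) = fvb_reduced"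
    and "word_reduction.cancel (\<lambda>x::sr. x) = fvb_cancel"
    and "word_reduction.red (\<lambda>x::sr. x) = fvb_red"
    and "word_reduction.inv_word (\<lambda>x::sr. x) = rev"
proof -
  show "word_reduction (\<lambda>x::sr. x)"
    by unfold_locales simp
  then interpret word_reduction "\<lambda>x::sr. x" .
  show reduced_eq: "reduced = fvb_reduced"
  proof
    show "reduced xs = fvb_reduced xs" for xs
      by (induction xs rule: fvb_reduced.induct) auto
  qed
  show cancel_eq: "cancel = fvb_cancel"
  proof (intro ext)
    show "cancel x xs = fvb_cancel x xs" for x xs
      by (cases xs) auto
  qed
  show "red = fvb_red"
    by (intro ext) (simp add: red_def fvb_red_def cancel_eq)
  show "inv_word = rev"
    by (intro ext) (simp add: inv_word_def)
qed

fun sr_swap :: "sr \<Rightarrow> sr" where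
  "sr_swap Sig = Rho"
| "sr_swap Rho = Sig"

fun fvb_alt :: "sr \<Rightarrow> nat \<Rightarrow> sr list" where
  "fvb_alt s 0 = []"
| "fvb_alt s (Suc n) = s # fvb_alt (sr_swap s) n"

lemma sr_swap_neq [simp]: "sr_swap s \<noteq> s"
  by (cases s) simp_all

lemma sr_swap_sr_swap [simp]: "sr_swap (sr_swap s) = s"
  by (cases s) simp_all

lemma length_fvb_alt [simp]: "length (fvb_alt s n) = n"
  by (induction n arbitrary: s) simp_all

lemma fvb_alt_eq_Nil_iff [simp]: "fvb_alt s n = [] \<longleftrightarrow> n = 0"
  by (cases n) simp_all

lemma hd_fvb_alt: "0 < n \<Longrightarrow> hd (fvb_alt s n) = s"
  by (cases n) simp_all

lemma fvb_reduced_alt: "fvb_reduced (fvb_alt s n)"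
  by (induction n arbitrary: s) (simp_all add: fvb.reduced_Cons hd_fvb_alt)

lemma fvb_reduced_Cons_eq_alt: "fvb_reduced (s # g) \<Longrightarrow> s # g = fvb_alt s (Suc (length g))"
proof (induction g arbitrary: s)
  case (Cons t g)
  then have "t = sr_swap s"
    by (cases s; cases t) simp_all
  moreover have "t # g = fvb_alt t (Suc (length g))"
    using Cons.IH[of t] Cons.prems by (simp add: fvb.reduced_Cons)
  ultimately show ?case
    by simp
qed simp

lemma fvb_alt_Suc_Suc: "fvb_alt s (Suc (Suc n)) = [s, sr_swap s] @ fvb_alt s n"
  by simp

lemma fvb_alt_add: "fvb_alt s (2 * i + n) = fvb_alt s (2 * i) @ fvb_alt s n"
proof (induction i)
  case (Suc i)
  have "2 * Suc i + n = Suc (Suc (2 * i + n))" "2 * Suc i = Suc (Suc (2 * i))"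
    by simp_all
  then show ?case
    using Suc by (simp only: fvb_alt_Suc_Suc append_assoc)
qed simp

lemma rev_fvb_alt: "rev (fvb_alt s (2 * j)) = fvb_alt (sr_swap s) (2 * j)"
proof (induction j)
  case (Suc j)
  have "fvb_alt (sr_swap s) (2 * Suc j) = fvb_alt (sr_swap s) (2 * j + 2)"
    by simp
  then show ?case
    using Suc fvb_alt_add[of "sr_swap s" j 2] by (simp add: numeral_2_eq_2)
qed simp

lemma count_Rho_fvb_alt: "length (filter (\<lambda>t. t = Rho) (fvb_alt s (2 * j))) = j"
proof (induction j)
  case (Suc j)
  have "2 * Suc j = Suc (Suc (2 * j))"
    by simp
  then show ?case
    using Suc by (cases s) (simp_all only: fvb_alt_Suc_Suc filter_append, simp_all)
qed simp

lemma FVX2_iff_alt: "g \<in> FVX2 \<longleftrightarrow> (\<exists>s k. g = fvb_alt s (4 * k))"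
proof
  assume g: "g \<in> FVX2"
  show "\<exists>s k. g = fvb_alt s (4 * k)"
  proof (cases g)
    case (Cons s g')
    obtain j where j: "length g = 2 * j"
      using g by (auto simp: FVX2_def FVP2_def elim: evenE)
    have "g = fvb_alt s (length g)"
      using g Cons fvb_reduced_Cons_eq_alt[of s g'] by (simp add: FVX2_def FVP2_def FVB2_def)
    then have alt: "g = fvb_alt s (2 * j)"
      by (simp only: j)
    then have "even j"
      using g count_Rho_fvb_alt[of s j] by (simp add: FVX2_def FVK2_def)
    then obtain k where "j = 2 * k"
      by (auto elim: evenE)
    then have "g = fvb_alt s (4 * k)"
      using alt by simp
    then show ?thesis
      by blast
  qed (auto intro!: exI[of _ Rho] exI[of _ 0])
next
  assume "\<exists>s k. g = fvb_alt s (4 * k)"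
  then obtain s k where "g = fvb_alt s (2 * (2 * k))"
    by auto
  then show "g \<in> FVX2"
    using count_Rho_fvb_alt[of s "2 * k"] fvb_reduced_alt[of s]
    by (simp add: FVX2_def FVP2_def FVK2_def FVB2_def)
qed

lemma rs_sq_eq_alt: "rs_sq = fvb_alt Rho 4" and rev_rs_sq_eq_alt: "rev rs_sq = fvb_alt Sig 4"
  by (simp_all add: rs_sq_def numeral_eq_Suc)

lemma fvb_mult_alt_funpow: "(fvb_mult (fvb_alt s 4) ^^ k) [] = fvb_alt s (4 * k)"
proof (induction k)
  case (Suc k)
  have "fvb_alt s 4 @ fvb_alt s (4 * k) = fvb_alt s (4 * Suc k)"
    using fvb_alt_add[of s 2 "4 * k"] by simp
  then show ?case
    using Suc fvb_reduced_alt by (simp only: funpow.simps comp_apply fvb_mult_def fvb.red_reduced)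
qed simp

lemma fvb_pow_rs_sq: "fvb_pow rs_sq n = fvb_alt (if 0 \<le> n then Rho else Sig) (4 * nat \<bar>n\<bar>)"
  unfolding fvb_pow_def fvb_inv_def rev_rs_sq_eq_alt unfolding rs_sq_eq_alt
  by (simp add: fvb_mult_alt_funpow)

lemma FVX2_eq_range: "FVX2 = range (fvb_pow rs_sq)"
proof (intro set_eqI iffI)
  fix g assume "g \<in> FVX2"
  then obtain s k where g: "g = fvb_alt s (4 * k)"
    by (auto simp: FVX2_iff_alt)
  have "g = fvb_pow rs_sq (if s = Rho then int k else - int k)"
    using g by (cases s; cases "k = 0") (simp_all add: fvb_pow_rs_sq)
  then show "g \<in> range (fvb_pow rs_sq)"
    by blast
qed (auto simp: FVX2_iff_alt fvb_pow_rs_sq)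

lemma inj_fvb_pow_rs_sq: "inj (fvb_pow rs_sq)"
proof (rule injI)
  fix n n' assume eq: "fvb_pow rs_sq n = fvb_pow rs_sq n'"
  have abs_eq: "\<bar>n\<bar> = \<bar>n'\<bar>"
    using arg_cong[OF eq, of length] by (simp add: fvb_pow_rs_sq)
  show "n = n'"
  proof (cases "n = 0")
    case False
    then have "(if 0 \<le> n then Rho else Sig) = (if 0 \<le> n' then Rho else Sig)"
      using arg_cong[OF eq, of hd] abs_eq by (simp add: fvb_pow_rs_sq hd_fvb_alt)
    then show ?thesis
      using abs_eq by (auto split: if_splits)
  qed (use abs_eq in simp)
qed

fun y_gen :: "ab \<Rightarrow> gen4" where
  "y_gen GA = Y1"
| "y_gen GB = Y2"

fun ab_swap :: "ab \<Rightarrow> ab" where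
  "ab_swap GA = GB"
| "ab_swap GB = GA"

lemma inj_y_gen: "inj y_gen"
  by (auto simp: inj_def elim: y_gen.elims)

lemma X_neq_y_gen [simp]: "X1 \<noteq> y_gen a" "X2 \<noteq> y_gen a"
  by (cases a; simp)+

lemma ab_swap_ab_swap [simp]: "ab_swap (ab_swap a) = a"
  by (cases a) simp_all

lemma inj_ab_swap: "inj ab_swap"
  by (metis ab_swap_ab_swap injI)

lemma w_at_y_eq_rename: "w_at_y w = fg_rename y_gen (fg_red w)"
  unfolding w_at_y_def
  by (subst fg_subst_eq_rename[where s = y_gen])
    (simp_all add: fg_gen_def fg_red_rename[OF inj_y_gen] split: ab.split)

fun x_swap :: "gen4 \<Rightarrow> gen4" where
  "x_swap X1 = X2"
| "x_swap X2 = X1"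
| "x_swap a = a"

fun x_tail :: "ab fword \<Rightarrow> int \<Rightarrow> sr \<Rightarrow> gen4 \<Rightarrow> ab fword" where
  "x_tail w m Sig X1 = w"
| "x_tail w m Sig X2 = fg_inv w"
| "x_tail w m Rho X1 = fg_genpow GB m"
| "x_tail w m Rho X2 = fg_genpow GA (- m)"
| "x_tail w m s a = []"

fun y_perm :: "sr \<Rightarrow> ab fword \<Rightarrow> ab fword" where
  "y_perm Sig u = u"
| "y_perm Rho u = fg_rename ab_swap u"

lemma Theta_img_y_gen: "Theta_img w m s (y_gen a) = [(y_gen (if s = Sig then a else ab_swap a), True)]"
  by (cases s; cases a) (simp_all add: Theta_img_def fg_gen_def)

lemma Theta_img_X:
  assumes "x = X1 \<or> x = X2"
  shows "Theta_img w m s x = fg_red ((x_swap x, True) # fg_rename y_gen (x_tail w m s x))"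
  using assms
  by (cases s) (auto simp: Theta_img_def fg_mult_def fg_gen_def w_at_y_eq_rename fg_rename_genpow
      fg_rename_inv fg_inv_genpow simp flip: fg_red_rename[OF inj_y_gen] fg.red_inv_word)

lemma fg_subst_Theta_img_rename_y_gen:
  "fg_subst (Theta_img w m s) (fg_rename y_gen u) = fg_red (fg_rename y_gen (y_perm s u))"
  by (cases s) (simp_all add: fg_subst_rename Theta_img_y_gen fg_rename_rename comp_def)

lemma fg_subst_Theta_img_X:
  assumes "x = X1 \<or> x = X2"
  shows "fg_subst (Theta_img w m s) ((x, True) # fg_rename y_gen u)
    = fg_red ((x_swap x, True) # fg_rename y_gen (x_tail w m s x @ y_perm s u))"
  using assms
  by (simp add: fg_subst_Cons_True Theta_img_X fg_subst_Theta_img_rename_y_gen fg_rename_append)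

lemma fg_red_Cons_rename_y_gen:
  assumes "fg_red u = []"
  shows "fg_red ((a, True) # fg_rename y_gen u) = [(a, True)]"
  using fg.red_Cons_red[of "(a, True)" "fg_rename y_gen u"] assms
  by (simp add: fg_red_rename[OF inj_y_gen])

lemma fg_red_x_tail_cancel:
  assumes "x = X1 \<or> x = X2"
  shows "fg_red (x_tail w m s (x_swap x) @ y_perm s (x_tail w m s x)) = []"
proof -
  have "fg_red (fg_genpow a (- k) @ fg_genpow a k) = []" "fg_red (fg_genpow a k @ fg_genpow a (- k)) = []"
    for a :: ab and k
    using fg.red_append_inv_word_cancel_mid(3,4)[of "[]" "fg_genpow a k"] by (simp_all add: fg_inv_genpow)
  then show ?thesis
    using assms fg.red_append_inv_word_cancel_mid(3,4)[of "[]" w]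
    by (cases s) (auto simp: fg_rename_genpow)
qed

lemma Theta_img_involutive:
  assumes "fg_reduced f"
  shows "fg_subst (Theta_img w m s) (fg_subst (Theta_img w m s) f) = f"
proof -
  have "fg_subst (Theta_img w m s) (Theta_img w m s a) = [(a, True)]" for a
  proof (cases "a = X1 \<or> a = X2")
    case True
    then show ?thesis
      using fg_subst_Theta_img_X[of "x_swap a" w m s "x_tail w m s a"] fg_red_x_tail_cancel[of a w m s]
        fg_red_Cons_rename_y_gen
      by (auto simp: Theta_img_X)
  next
    case False
    then obtain b where "a = y_gen b"
      by (cases a) (auto intro: y_gen.simps[symmetric])
    then show ?thesis
      by (simp add: Theta_img_y_gen fg_subst_single split: if_split)
  qed
  then show ?thesis
    using assms by (simp add: fg_subst_comp fg_subst_id_on fg.red_reduced)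
qed

lemma Theta_Nil [simp]: "Theta w m [] f = f"
  and Theta_Cons: "Theta w m (s # g) f = Theta w m g (fg_subst (Theta_img w m s) f)"
  and Theta_append: "Theta w m (g @ h) f = Theta w m h (Theta w m g f)"
  and Theta_snoc: "Theta w m (g @ [s]) f = fg_subst (Theta_img w m s) (Theta w m g f)"
  by (simp_all add: Theta_def)

lemma fg_reduced_Theta: "fg_reduced f \<Longrightarrow> fg_reduced (Theta w m g f)"
  by (induction g rule: rev_induct) (simp_all add: Theta_snoc)

lemma Theta_fvb_red:
  assumes "fg_reduced f"
  shows "Theta w m (fvb_red g) f = Theta w m g f"
  using assms
proof (induction g arbitrary: f)
  case (Cons s g)
  have "Theta w m (fvb_red (s # g)) f = Theta w m (s # fvb_red g) f"
  proof (cases "\<exists>h. fvb_red g = s # h")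
    case True
    then obtain h where "fvb_red g = s # h" by blast
    then show ?thesis
      using Cons.prems by (simp add: fvb.red_Cons Theta_Cons Theta_img_involutive)
  next
    case False
    then show ?thesis
      by (cases "fvb_red g") (auto simp: fvb.red_Cons)
  qed
  then show ?case
    using Cons by (simp add: Theta_Cons)
qed simp

lemma Theta_eq_subst:
  assumes "fg_reduced f"
  shows "Theta w m g f = fg_subst (\<lambda>a. Theta w m g [(a, True)]) f"
  using assms
proof (induction g arbitrary: f rule: rev_induct)
  case (snoc s g)
  have "Theta w m (g @ [s]) f = fg_subst (Theta_img w m s) (fg_subst (\<lambda>a. Theta w m g [(a, True)]) f)"
    by (simp only: Theta_snoc snoc)
  also have "\<dots> = fg_subst (\<lambda>a. Theta w m (g @ [s]) [(a, True)]) f"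
    by (simp add: fg_subst_comp Theta_snoc)
  finally show ?case .
qed (simp add: fg_subst_id_on fg.red_reduced)

lemma Theta_ker_iff:
  "g \<in> Theta_ker w m \<longleftrightarrow> g \<in> FVB2 \<and> (\<forall>a. Theta w m g [(a, True)] = [(a, True)])"
proof -
  have "Theta w m g f = f"
    if "\<forall>a. Theta w m g [(a, True)] = [(a, True)]" and "fg_reduced f" for f
    using that Theta_eq_subst[OF that(2)] by (simp add: fg_subst_id_on fg.red_reduced)
  then show ?thesis
    by (auto simp: Theta_ker_def)
qed

lemma not_faithful_iff: "\<not> faithful w m \<longleftrightarrow> (\<exists>g \<in> Theta_ker w m. g \<noteq> [])"
proof
  assume "\<not> faithful w m"
  then obtain g h where gh: "g \<in> FVB2" "h \<in> FVB2" "g \<noteq> h"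
    and same: "\<And>f. fg_reduced f \<Longrightarrow> Theta w m g f = Theta w m h f"
    unfolding faithful_def by blast
  let ?k = "fvb_red (g @ rev h)"
  have "Theta w m ?k f = f" if "fg_reduced f" for f
  proof -
    have "Theta w m ?k f = Theta w m (rev h) (Theta w m h f)"
      using that by (simp add: Theta_fvb_red Theta_append same)
    also have "\<dots> = Theta w m (fvb_red (h @ rev h)) f"
      using that by (simp only: Theta_fvb_red Theta_append)
    finally show ?thesis by simp
  qed
  moreover have "?k \<noteq> []"
    using gh fvb.reduced_eq_if_red_append_inv_word_eq_Nil by (auto simp: FVB2_def)
  moreover have "fvb_reduced ?k"
    by simp
  ultimately show "\<exists>g \<in> Theta_ker w m. g \<noteq> []"
    unfolding Theta_ker_def FVB2_def by blast
next
  assume "\<exists>g \<in> Theta_ker w m. g \<noteq> []"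
  then obtain g where "g \<in> FVB2" "g \<noteq> []" "\<forall>f. fg_reduced f \<longrightarrow> Theta w m g f = Theta w m [] f"
    by (auto simp: Theta_ker_def)
  moreover have "[] \<in> FVB2"
    by (simp add: FVB2_def)
  ultimately show "\<not> faithful w m"
    unfolding faithful_def by blast
qed

lemma Nil_in_Theta_ker: "[] \<in> Theta_ker w m"
  by (simp add: Theta_ker_def FVB2_def)

lemma Theta_ker_mult: "g \<in> Theta_ker w m \<Longrightarrow> h \<in> Theta_ker w m \<Longrightarrow> fvb_mult g h \<in> Theta_ker w m"
  by (auto simp: Theta_ker_def FVB2_def fvb_mult_def Theta_fvb_red Theta_append fg_reduced_Theta)

lemma Theta_ker_inv: "g \<in> Theta_ker w m \<Longrightarrow> fvb_inv g \<in> Theta_ker w m"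
proof -
  assume g: "g \<in> Theta_ker w m"
  have "Theta w m (rev g) f = f" if "fg_reduced f" for f
  proof -
    have "Theta w m (rev g) f = Theta w m (g @ rev g) f"
      using g that by (simp add: Theta_ker_def Theta_append)
    also have "\<dots> = f"
      using Theta_fvb_red[OF that, of w m "g @ rev g"] by simp
    finally show ?thesis .
  qed
  moreover have "fvb_reduced (rev g)"
    using g fvb.reduced_inv_word by (simp add: Theta_ker_def FVB2_def)
  ultimately show ?thesis
    by (simp add: Theta_ker_def FVB2_def fvb_inv_def)
qed

lemma Theta_ker_pow: "g \<in> Theta_ker w m \<Longrightarrow> fvb_pow g n \<in> Theta_ker w m"
proof -
  assume g: "g \<in> Theta_ker w m"
  have "(fvb_mult h ^^ k) [] \<in> Theta_ker w m" if "h \<in> Theta_ker w m" for h k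
    using that by (induction k) (simp_all add: Theta_ker_mult Nil_in_Theta_ker)
  then show ?thesis
    using g Theta_ker_inv by (simp add: fvb_pow_def)
qed

section \<open>The kernel\<close>

lemma Theta_y_gen:
  "Theta w m g [(y_gen a, True)]
    = [(y_gen (if even (length (filter (\<lambda>s. s = Rho) g)) then a else ab_swap a), True)]"
proof (induction g rule: rev_induct)
  case (snoc s g)
  then show ?case
    by (cases s) (simp_all add: Theta_snoc fg_subst_single Theta_img_y_gen)
qed simp

lemma x_swap_funpow_X1: "(x_swap ^^ n) X1 = (if even n then X1 else X2)"
  by (induction n) simp_all

lemma x_swap_funpow_X:
  assumes "x = X1 \<or> x = X2"
  shows "(x_swap ^^ n) x = X1 \<or> (x_swap ^^ n) x = X2"
  using assms by (induction n) auto

lemma Theta_X: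
  assumes "x = X1 \<or> x = X2"
  shows "\<exists>q. Theta w m g [(x, True)] = fg_red (((x_swap ^^ length g) x, True) # fg_rename y_gen q)"
proof (induction g rule: rev_induct)
  case Nil
  show ?case
    by (rule exI[of _ "[]"]) simp
next
  case (snoc s g)
  then obtain q where q: "Theta w m g [(x, True)] = fg_red (((x_swap ^^ length g) x, True) # fg_rename y_gen q)"
    by blast
  show ?case
    using fg_subst_Theta_img_X[OF x_swap_funpow_X[OF assms, of "length g"], of w m s q]
    by (auto simp: Theta_snoc q)
qed

lemma fg_red_Cons_rename_y_gen_eq_single:
  assumes red_eq: "fg_red ((b, True) # fg_rename y_gen q) = [(a, True)]" and a: "a \<notin> range y_gen"
  shows "b = a"
proof (rule ccontr)
  assume "b \<noteq> a"
  have "fg_rename y_gen (fg_red q) = fg_red ([(b, False)] @ [(b, True)] @ fg_rename y_gen q)"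
    using fg.red_append_inv_word_cancel(2)[of "[(b, True)]"]
    by (simp add: fg_red_rename[OF inj_y_gen] fg_inv_def fg_invl_def)
  also have "\<dots> = [(b, False), (a, True)]"
    using red_eq \<open>b \<noteq> a\<close> fg.red_append_red_right[of "[(b, False)]"]
    by (simp add: fg.red_Cons fg_invl_def)
  finally have "(a, True) \<in> set (fg_rename y_gen (fg_red q))"
    by simp
  then show False
    using a by (auto simp: fg_rename_def)
qed

lemma Theta_ker_subset_FVX2: "Theta_ker w m \<subseteq> FVX2"
proof
  fix g assume g: "g \<in> Theta_ker w m"
  then have fixes_gens: "\<And>a. Theta w m g [(a, True)] = [(a, True)]"
    by (simp add: Theta_ker_iff)
  have "even (length (filter (\<lambda>s. s = Rho) g))"
    using fixes_gens[of Y1] Theta_y_gen[of w m g GA] by (auto split: if_splits)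
  moreover obtain q where "fg_red (((x_swap ^^ length g) X1, True) # fg_rename y_gen q) = [(X1, True)]"
    using Theta_X[of X1 w m g] fixes_gens[of X1] by auto
  then have "(x_swap ^^ length g) X1 = X1"
    by (rule fg_red_Cons_rename_y_gen_eq_single) auto
  then have "even (length g)"
    by (simp add: x_swap_funpow_X1 split: if_splits)
  ultimately show "g \<in> FVX2"
    using g by (simp add: Theta_ker_def FVX2_def FVP2_def FVK2_def)
qed

definition twisted_square :: "ab fword \<Rightarrow> ab fword" where
  "twisted_square z = z @ fg_rename ab_swap z"

lemma Theta_rs_sq_X:
  "Theta w m rs_sq [(X1, True)]
    = fg_red ((X1, True) # fg_rename y_gen (twisted_square (fg_inv w @ fg_genpow GB m)))"
  "Theta w m rs_sq [(X2, True)]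
    = fg_red ((X2, True) # fg_rename y_gen (twisted_square (w @ fg_genpow GA (- m))))"
  by (simp_all add: Theta_def rs_sq_def fg_subst_single Theta_img_X fg_subst_Theta_img_X
      twisted_square_def)

text \<open>The first word is a cyclic permutation of the inverse of the second.\<close>

lemma fg_red_twisted_square_eq_Nil_iff:
  "fg_red (twisted_square (fg_inv w @ fg_genpow GB m)) = []
    \<longleftrightarrow> fg_red (twisted_square (w @ fg_genpow GA (- m))) = []"
proof -
  let ?b = "fg_genpow GB m @ fg_inv (fg_rename ab_swap w) @ fg_genpow GA m"
  have "twisted_square (fg_inv w @ fg_genpow GB m) = fg_inv w @ ?b"
    by (simp add: twisted_square_def fg_rename_append fg_rename_inv fg_rename_genpow)
  moreover have "fg_inv (twisted_square (w @ fg_genpow GA (- m))) = ?b @ fg_inv w"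
    by (simp add: twisted_square_def fg_rename_append fg_rename_genpow fg_inv_genpow)
  ultimately show ?thesis
    by (metis fg.red_append_eq_Nil_commute fg.red_inv_word_eq_Nil_iff)
qed

lemma Theta_rs_sq_y_gen: "Theta w m rs_sq [(y_gen a, True)] = [(y_gen a, True)]"
  by (simp add: Theta_y_gen rs_sq_def)

lemma Theta_fvb_alt_Rho_X2:
  "Theta w m (fvb_alt Rho (4 * k)) [(X2, True)]
    = fg_red ((X2, True) # fg_rename y_gen (concat (replicate k (twisted_square (w @ fg_genpow GA (- m))))))"
proof (induction k)
  case (Suc k)
  let ?T = "twisted_square (w @ fg_genpow GA (- m))"
  have "fvb_alt Rho (4 * Suc k) = fvb_alt Rho (2 * (2 * k) + 4)"
    by (simp add: add.commute)
  then have "fvb_alt Rho (4 * Suc k) = fvb_alt Rho (4 * k) @ rs_sq"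
    by (simp only: fvb_alt_add rs_sq_eq_alt) simp
  then have "Theta w m (fvb_alt Rho (4 * Suc k)) [(X2, True)]
      = fg_subst (\<lambda>a. Theta w m rs_sq [(a, True)])
          ((X2, True) # fg_rename y_gen (concat (replicate k ?T)))"
    using Suc.IH Theta_eq_subst[of "Theta w m (fvb_alt Rho (4 * k)) [(X2, True)]" w m rs_sq]
    by (simp add: Theta_append fg_reduced_Theta)
  also have "\<dots> = fg_red (Theta w m rs_sq [(X2, True)] @ fg_rename y_gen (concat (replicate k ?T)))"
    by (simp add: fg_subst_Cons_True fg_subst_rename Theta_rs_sq_y_gen)
  finally show ?case
    by (simp add: Theta_rs_sq_X fg_rename_append)
qed simp

lemma rs_sq_in_Theta_ker:
  assumes "fg_red (twisted_square (w @ fg_genpow GA (- m))) = []"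
  shows "rs_sq \<in> Theta_ker w m"
proof -
  have "fg_red (twisted_square (fg_inv w @ fg_genpow GB m)) = []"
    using assms fg_red_twisted_square_eq_Nil_iff by blast
  then have "Theta w m rs_sq [(a, True)] = [(a, True)]" for a
    using assms Theta_rs_sq_y_gen[of w m GA] Theta_rs_sq_y_gen[of w m GB]
    by (cases a) (simp_all add: Theta_rs_sq_X fg_red_Cons_rename_y_gen)
  moreover have "rs_sq \<in> FVB2"
    by (simp add: FVB2_def rs_sq_def)
  ultimately show ?thesis
    by (simp add: Theta_ker_iff)
qed

lemma twisted_square_trivial_if_Theta_ker_nontrivial:
  assumes "g \<in> Theta_ker w m" "g \<noteq> []"
  shows "fg_red (twisted_square (w @ fg_genpow GA (- m))) = []"
proof -
  obtain s k where g: "g = fvb_alt s (4 * k)"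
    using assms(1) Theta_ker_subset_FVX2 FVX2_iff_alt by blast
  with assms(2) have "0 < k"
    by (cases k) simp_all
  have "fvb_alt Rho (4 * k) \<in> Theta_ker w m"
  proof (cases s)
    case Sig
    then have "fvb_inv g = fvb_alt Rho (4 * k)"
      using g rev_fvb_alt[of Sig "2 * k"] by (simp add: fvb_inv_def)
    then show ?thesis
      using Theta_ker_inv[OF assms(1)] by simp
  qed (use g assms(1) in simp)
  then have "fg_red ((X2, True) # fg_rename y_gen
      (concat (replicate k (twisted_square (w @ fg_genpow GA (- m)))))) = [(X2, True)]"
    unfolding Theta_ker_iff Theta_fvb_alt_Rho_X2[symmetric] by blast
  then have "fg_rename y_gen (fg_red (concat (replicate k (twisted_square (w @ fg_genpow GA (- m)))))) = []"
    by (metis fg.red_eq_Nil_if_red_Cons_eq_single fg_red_rename[OF inj_y_gen])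
  then show ?thesis
    using fg_torsion_free[OF \<open>0 < k\<close>] by (simp add: fg_rename_def)
qed

lemma not_faithful_iff_twisted_square:
  "\<not> faithful w m \<longleftrightarrow> fg_red (twisted_square (w @ fg_genpow GA (- m))) = []"
proof
  assume "\<not> faithful w m"
  then show "fg_red (twisted_square (w @ fg_genpow GA (- m))) = []"
    using not_faithful_iff twisted_square_trivial_if_Theta_ker_nontrivial by blast
next
  assume "fg_red (twisted_square (w @ fg_genpow GA (- m))) = []"
  then show "\<not> faithful w m"
    using rs_sq_in_Theta_ker not_faithful_iff by (force simp: rs_sq_def)
qed

lemma Theta_ker_eq_FVX2:
  assumes "\<not> faithful w m"
  shows "Theta_ker w m = FVX2"
proof
  show "FVX2 \<subseteq> Theta_ker w m"
    using rs_sq_in_Theta_ker assms Theta_ker_pow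
    by (auto simp: FVX2_eq_range not_faithful_iff_twisted_square)
qed (rule Theta_ker_subset_FVX2)

section \<open>The words w with non-trivial kernel\<close>

fun alt_pows :: "ab \<Rightarrow> ab \<Rightarrow> int list \<Rightarrow> ab fword" where
  "alt_pows a b [] = []"
| "alt_pows a b (k # ks) = fg_genpow a k @ alt_pows b a ks"

lemma alt_word_eq_red_alt_pows: "alt_word a b ks = fg_red (alt_pows a b ks)"
proof -
  have "concat (map (\<lambda>i. fg_genpow (if even i then a else b) (ks ! i)) [0..<length ks]) = alt_pows a b ks"
  proof (induction ks arbitrary: a b)
    case (Cons k ks)
    have "[0..<length (k # ks)] = 0 # map Suc [0..<length ks]"
      by (simp add: upt_conv_Cons map_Suc_upt del: upt_Suc)
    moreover have "(\<lambda>i. fg_genpow (if odd i then a else b) (ks ! i))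
        = (\<lambda>i. fg_genpow (if even i then b else a) (ks ! i))"
      by auto
    ultimately show ?case
      using Cons[of b a] by (simp add: comp_def del: upt_Suc)
  qed simp
  then show ?thesis
    by (simp add: alt_word_def)
qed

lemma rename_ab_swap_alt_pows: "fg_rename ab_swap (alt_pows a b ks) = alt_pows (ab_swap a) (ab_swap b) ks"
  by (induction ks arbitrary: a b) (simp_all add: fg_rename_append fg_rename_genpow)

definition interior_nonzero :: "int list \<Rightarrow> bool" where
  "interior_nonzero ks \<longleftrightarrow> (\<forall>i. 0 < i \<and> i + 1 < length ks \<longrightarrow> ks ! i \<noteq> 0)"

lemma fg_reduced_eq_alt_pows:
  assumes "fg_reduced v"
  shows "\<exists>ks. ks \<noteq> [] \<and> interior_nonzero ks \<and> alt_pows a (ab_swap a) ks = v"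
  using assms
proof (induction v arbitrary: a)
  case Nil
  show ?case
    by (intro exI[of _ "[0]"]) (simp add: interior_nonzero_def fg_genpow_def)
next
  case (Cons x v)
  obtain c e where x: "x = (c, e)"
    by (cases x)
  obtain k rest where rest: "interior_nonzero (k # rest)" "alt_pows c (ab_swap c) (k # rest) = v"
    using Cons.IH[of c] Cons.prems by (auto simp: fg.reduced_Cons neq_Nil_conv)
  have no_cancel: "v \<noteq> [] \<Longrightarrow> hd v \<noteq> (c, \<not> e)"
    using Cons.prems x by (simp add: fg.reduced_Cons fg_invl_def)
  obtain k' where "fg_genpow c k' = (c, e) # fg_genpow c k"
  proof (cases e)
    case True
    then have "0 \<le> k"
      using no_cancel hd_fg_genpow[of k c] rest(2) by force
    then show ?thesis
      using that[of "k + 1"] fg_genpow_Cons(1)[of k c] True by simp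
  next
    case False
    then have "k \<le> 0"
      using no_cancel hd_fg_genpow[of k c] rest(2) by force
    then show ?thesis
      using that[of "k - 1"] fg_genpow_Cons(2)[of k c] False by simp
  qed
  then have k': "k' \<noteq> 0" "alt_pows c (ab_swap c) (k' # rest) = x # v"
    using rest(2) x by (auto simp: fg_genpow_def split: if_splits)
  have interior: "interior_nonzero (k' # rest)"
    using rest(1) by (auto simp: interior_nonzero_def)
  show ?case
  proof (cases "c = a")
    case False
    then have "alt_pows a (ab_swap a) (0 # k' # rest) = x # v"
      using k' by (cases a; cases c) (simp_all add: fg_genpow_def)
    moreover have "interior_nonzero (0 # k' # rest)"
      using interior k'(1) by (auto simp: interior_nonzero_def nth_Cons split: nat.splits)
    ultimately show ?thesis
      by blast
  qed (use k' interior in blast)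
qed

lemma special_word_eq:
  "special_word ks m
    = fg_red (alt_pows GA GB ks @ fg_inv (fg_rename ab_swap (alt_pows GA GB ks)) @ fg_genpow GA m)"
proof -
  have "alt_word GB GA ks = fg_red (fg_rename ab_swap (alt_pows GA GB ks))"
    by (simp add: alt_word_eq_red_alt_pows rename_ab_swap_alt_pows)
  then show ?thesis
    by (simp add: special_word_def fg_mult_def alt_word_eq_red_alt_pows fg.red_inv_word[symmetric])
qed

lemma special_word_iff:
  assumes "fg_reduced w"
  shows "(\<exists>ks. ks \<noteq> [] \<and> interior_nonzero ks \<and> w = special_word ks m)
    \<longleftrightarrow> (\<exists>v. fg_red (w @ fg_genpow GA (- m)) = fg_red (v @ fg_inv (fg_rename ab_swap v)))"
proof
  assume "\<exists>ks. ks \<noteq> [] \<and> interior_nonzero ks \<and> w = special_word ks m"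
  then show "\<exists>v. fg_red (w @ fg_genpow GA (- m)) = fg_red (v @ fg_inv (fg_rename ab_swap v))"
    using fg.reduced_eq_red_append_iff[OF assms]
    by (metis append_assoc fg_inv_genpow special_word_eq)
next
  assume "\<exists>v. fg_red (w @ fg_genpow GA (- m)) = fg_red (v @ fg_inv (fg_rename ab_swap v))"
  then obtain v where v: "fg_red (w @ fg_genpow GA (- m)) = fg_red (v @ fg_inv (fg_rename ab_swap v))"
    by blast
  obtain ks where ks: "ks \<noteq> []" "interior_nonzero ks" "alt_pows GA GB ks = fg_red v"
    using fg_reduced_eq_alt_pows[of "fg_red v" GA] by auto
  let ?p = "alt_pows GA GB ks"
  have p: "fg_red (?p @ fg_inv (fg_rename ab_swap ?p)) = fg_red (v @ fg_inv (fg_rename ab_swap v))"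
    by (simp add: ks(3) fg_red_rename[OF inj_ab_swap, symmetric] fg.red_inv_word[symmetric])
  have "w = fg_red ((?p @ fg_inv (fg_rename ab_swap ?p)) @ fg_genpow GA m)"
    unfolding fg.reduced_eq_red_append_iff[OF assms] by (simp only: fg_inv_genpow v p)
  then have "w = special_word ks m"
    by (simp add: special_word_eq)
  then show "\<exists>ks. ks \<noteq> [] \<and> interior_nonzero ks \<and> w = special_word ks m"
    using ks by blast
qed

theorem theorem2p5:
  fixes w :: "ab fword" and m1 :: int
  assumes "fg_reduced w"
  shows "(\<not> faithful w m1 \<longleftrightarrow>
            (\<exists>ks. ks \<noteq> [] \<and> (\<forall>i. 0 < i \<and> i + 1 < length ks \<longrightarrow> ks ! i \<noteq> 0)
                  \<and> w = special_word ks m1))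
       \<and> (\<not> faithful w m1 \<longrightarrow>
            Theta_ker w m1 = FVX2
          \<and> FVX2 = range (fvb_pow rs_sq)
          \<and> inj (fvb_pow rs_sq))"
proof -
  have "\<not> faithful w m1 \<longleftrightarrow> fg_red (twisted_square (w @ fg_genpow GA (- m1))) = []"
    by (rule not_faithful_iff_twisted_square)
  also have "\<dots> \<longleftrightarrow> (\<exists>v. fg_red (w @ fg_genpow GA (- m1)) = fg_red (v @ fg_inv (fg_rename ab_swap v)))"
    unfolding twisted_square_def by (rule fg_red_append_rename_eq_Nil_iff[OF inj_ab_swap ab_swap_ab_swap])
  also have "\<dots> \<longleftrightarrow> (\<exists>ks. ks \<noteq> [] \<and> interior_nonzero ks \<and> w = special_word ks m1)"
    by (rule special_word_iff[OF assms, symmetric])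
  finally show ?thesis
    using Theta_ker_eq_FVX2 FVX2_eq_range inj_fvb_pow_rs_sq by (simp add: interior_nonzero_def)
qed

end
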